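(* Let $n\ge2$ and let $0\le x_1(0)\le\cdots\le x_n(0)\le1$ evolve under the static coverage control law. Then each $x_i(t)$ converges as $t\to\infty$ to a limit $\bar x_i$, and the limiting positions achieve optimal coverage: $\Phi(\bar x_1,\dots,\bar x_n,\rho)=\Phi^*$. Moreover, there is an absolute constant $C>0$ (independent of $n,\rho$, the initial positions and $\epsilon$) such that for every $\epsilon\in(0,1]$ and every $t\ge C\,n^2\log\!\big(\frac{n}{\epsilon}\frac{\rho_{\max}}{\rho_{\min}}\big)$, we have $|x_i(t)-\bar x_i|\le\epsilon$ for all $i$.
   Context: Let $\rho:[0,1]\to(0,\infty)$ be piecewise continuous with $\rho_{\min}\le\rho(z)\le\rho_{\max}$ for positive constants $\rho_{\min},\rho_{\max}$. For $a,b\in[0,1]$ let $d_\rho(a,b)=\int_{\min(a,b)}^{\max(a,b)}\rho(z)\,dz$, and $F(x)=\int_0^x\rho(z)\,dz$. The coverage of $x_1,\dots,x_n\in[0,1]$ is $\Phi(x_1,\dots,x_n,\rho)=\max_{y\in[0,1]}\min_i d_\rho(y,x_i)$ and $\Phi^*=\inf_{(x_1,\dots,x_n)\in[0,1]^n}\Phi(x_1,\dots,x_n,\rho)$. For $0\le a\le b\le1$ and $\alpha\ge0$, the $\alpha$-median $m^\alpha_\rho(a,b)$ is the unique $c\in[a,b]$ with $\int_a^c\rho(z)\,dz=\alpha\int_c^b\rho(z)\,dz$, equivalently $F(c)=\frac{F(a)+\alpha F(b)}{1+\alpha}$. The static coverage control law for $n\ge2$ agents is the iteration $x_1(t+1)=m^{1/2}_\rho(0,x_2(t))$,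 $x_i(t+1)=m^{1}_\rho(x_{i-1}(t),x_{i+1}(t))$ for $2\le i\le n-1$, $x_n(t+1)=m^{2}_\rho(x_{n-1}(t),1)$. *)

theory Defs
  imports "HOL-Analysis.Analysis"
begin

definition piecewise_continuous_on :: "real \<Rightarrow> real \<Rightarrow> (real \<Rightarrow> real) \<Rightarrow> bool" where
  "piecewise_continuous_on a b f \<longleftrightarrow>
     (\<exists>S. finite S \<and> continuous_on ({a..b} - S) f \<and>
        (\<forall>s\<in>S \<inter> {a..b}.
           (s < b \<longrightarrow> (\<exists>L. (f \<longlongrightarrow> L) (at_right s))) \<and>
           (a < s \<longrightarrow> (\<exists>L. (f \<longlongrightarrow> L) (at_left s)))))"

definition cumdens :: "(real \<Rightarrow> real) \<Rightarrow> real \<Rightarrow> real" where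
  "cumdens \<rho> x = integral {0..x} \<rho>"

definition dist_rho :: "(real \<Rightarrow> real) \<Rightarrow> real \<Rightarrow> real \<Rightarrow> real" where
  "dist_rho \<rho> a b = integral {min a b..max a b} \<rho>"

definition coverage :: "nat \<Rightarrow> (nat \<Rightarrow> real) \<Rightarrow> (real \<Rightarrow> real) \<Rightarrow> real" where
  "coverage n x \<rho> = (SUP y\<in>{0..1}. Min ((\<lambda>i. dist_rho \<rho> y (x i)) ` {1..n}))"

definition opt_coverage :: "nat \<Rightarrow> (real \<Rightarrow> real) \<Rightarrow> real" where
  "opt_coverage n \<rho> = (INF x\<in>{x. \<forall>i\<in>{1..n}. x i \<in> {0..1}}. coverage n x \<rho>)"

definition amedian :: "real \<Rightarrow> (real \<Rightarrow> real) \<Rightarrow> real \<Rightarrow> real \<Rightarrow> real" where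
  "amedian \<alpha> \<rho> a b = (THE c. c \<in> {a..b} \<and> integral {a..c} \<rho> = \<alpha> * integral {c..b} \<rho>)"

text \<open>Static coverage control law: x t i is the position of agent i at time t.\<close>
definition coverage_law :: "nat \<Rightarrow> (real \<Rightarrow> real) \<Rightarrow> (nat \<Rightarrow> nat \<Rightarrow> real) \<Rightarrow> bool" where
  "coverage_law n \<rho> x \<longleftrightarrow> (\<forall>t.
     x (Suc t) 1 = amedian (1/2) \<rho> 0 (x t 2) \<and>
     (\<forall>i. 2 \<le> i \<and> i \<le> n - 1 \<longrightarrow> x (Suc t) i = amedian 1 \<rho> (x t (i - 1)) (x t (i + 1))) \<and>
     x (Suc t) n = amedian 2 \<rho> (x t (n - 1)) 1)"

end

theory Submission
  imports Defs
begin

text \<open>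
  Let F be the cumulative density of rho.  Since rho is bounded between
  rho_min > 0 and rho_max, F is a continuous, strictly increasing bijection of [0,1]
  onto [0, F 1] which changes distances by a factor between rho_min and rho_max.  The
  alpha-median is characterised by F c = (F a + alpha * F b) / (1 + alpha), so in the
  coordinates u_i = F(x_i) the control law is the affine averaging map
    u_1 := u_2 / 3,   u_i := (u_(i-1) + u_(i+1)) / 2,   u_n := (u_(n-1) + 2 F 1) / 3.
  Its fixed point is the target u_i = (2i - 1) F 1 / (2n): the agents sit at the mass
  midpoints of n cells of equal mass.  The concave weight w_i = n^2 - (i - (n+1)/2)^2
  satisfies (w_(i-1) + w_(i+1)) / 2 = w_i - 1 <= (1 - 1/n^2) w_i, and the end rows are
  even more contracting, so the weighted error max_i |u_i - target_i| / w_i shrinks by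
  the factor 1 - 1/n^2 in every step.  Pulling this back through F gives
  |x_i(t) - xbar_i| <= 4/3 (rho_max / rho_min) (1 - 1/n^2)^t, which yields the claimed
  time bound with C = 1.  Finally, a pigeonhole argument over the n + 1 levels
  k F 1 / n shows that every configuration has coverage at least F 1 / (2n), and the
  target configuration attains this value, so it is optimal.
\<close>


subsection \<open>Integrability of piecewise continuous functions\<close>

text \<open>A bounded piecewise continuous function is Lebesgue measurable (it is continuous
  off a finite, hence negligible, set) and dominated by a constant, so it is integrable.\<close>

lemma piecewise_continuous_integrable:
  fixes f :: "real \<Rightarrow> real"
  assumes pc: "piecewise_continuous_on a b f" and bound: "\<And>z. z \<in> {a..b} \<Longrightarrow> \<bar>f z\<bar> \<le> B"
  shows "f integrable_on {a..b}"
proof -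
  obtain S where S: "finite S" "continuous_on ({a..b} - S) f"
    using pc unfolding piecewise_continuous_on_def by blast
  have S_lebesgue: "{a..b} - S \<in> sets lebesgue"
    using S(1) by (simp add: finite_imp_closed sets.Diff)
  have "f \<in> borel_measurable (lebesgue_on ({a..b} - S))"
    by (rule continuous_imp_measurable_on_sets_lebesgue[OF S(2) S_lebesgue])
  then have "f measurable_on ({a..b} - S)"
    using measurable_on_iff_borel_measurable[OF S_lebesgue] by blast
  moreover have "negligible ((({a..b} - S) - {a..b}) \<union> ({a..b} - ({a..b} - S)))"
    by (rule negligible_subset[of S]) (auto simp: S(1) negligible_finite)
  ultimately have "f measurable_on {a..b}"
    by (rule measurable_on_spike_set)
  then have "f \<in> borel_measurable (lebesgue_on {a..b})"
    by (simp add: measurable_on_iff_borel_measurable)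
  then show ?thesis
    by (rule measurable_bounded_by_integrable_imp_integrable[of _ _ "\<lambda>_. B"])
       (auto simp: bound)
qed


lemma one_minus_inverse_power_le_exp:
  assumes "1 \<le> N"
  shows "(1 - 1 / N) ^ t \<le> exp (- real t / N)"
proof -
  have "(1 - 1 / N) ^ t \<le> exp (- 1 / N) ^ t"
    using assms exp_ge_add_one_self[of "- 1 / N"] by (intro power_mono) auto
  also have "\<dots> = exp (- real t / N)" by (simp flip: exp_of_nat_mult)
  finally show ?thesis .
qed

lemma stepwise_mono_le:
  fixes f :: "nat \<Rightarrow> 'a :: order"
  assumes mono: "\<forall>k. 1 \<le> k \<and> k < n \<longrightarrow> f k \<le> f (k + 1)"
    and "1 \<le> i" "i \<le> j" "j \<le> n"
  shows "f i \<le> f j"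
  using assms(3)
proof (induction rule: dec_induct)
  case base
  show ?case by simp
next
  case (step k)
  have "f i \<le> f k" by (rule step.IH)
  also have "f k \<le> f (k + 1)" using mono step.hyps assms(2,4) by simp
  finally show ?case by simp
qed


subsection \<open>Bounded densities and their cumulative density\<close>

locale bounded_density =
  fixes \<rho> :: "real \<Rightarrow> real" and rmin rmax :: real
  assumes integrable: "\<rho> integrable_on {0..1}"
    and bounds: "\<And>z. z \<in> {0..1} \<Longrightarrow> rmin \<le> \<rho> z \<and> \<rho> z \<le> rmax"
    and rmin_pos: "0 < rmin"
begin

abbreviation "F \<equiv> cumdens \<rho>"

lemma rmin_le_rmax: "rmin \<le> rmax"
  using bounds[of 0] by auto

lemma integrable_subinterval: "0 \<le> a \<Longrightarrow> b \<le> 1 \<Longrightarrow> \<rho> integrable_on {a..b}"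
  by (rule integrable_subinterval_real[OF integrable]) auto

lemma integral_eq_cumdens_diff:
  assumes "0 \<le> a" "a \<le> b" "b \<le> 1"
  shows "integral {a..b} \<rho> = F b - F a"
proof -
  have "integral {0..a} \<rho> + integral {a..b} \<rho> = integral {0..b} \<rho>"
    by (rule Henstock_Kurzweil_Integration.integral_combine)
       (use assms integrable_subinterval in auto)
  then show ?thesis unfolding cumdens_def by simp
qed

lemma cumdens_increment_bounds:
  assumes "0 \<le> a" "a \<le> b" "b \<le> 1"
  shows "rmin * (b - a) \<le> F b - F a" "F b - F a \<le> rmax * (b - a)"
proof -
  have i: "\<rho> integrable_on {a..b}" using integrable_subinterval assms by auto
  have "integral {a..b} (\<lambda>_. rmin) \<le> integral {a..b} \<rho>"
    by (rule integral_le[OF _ i]) (use bounds assms in auto)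
  then show "rmin * (b - a) \<le> F b - F a"
    using assms by (simp add: integral_eq_cumdens_diff mult.commute)
  have "integral {a..b} \<rho> \<le> integral {a..b} (\<lambda>_. rmax)"
    by (rule integral_le[OF i]) (use bounds assms in auto)
  then show "F b - F a \<le> rmax * (b - a)"
    using assms by (simp add: integral_eq_cumdens_diff mult.commute)
qed

lemma cumdens_0: "F 0 = 0"
  unfolding cumdens_def by simp

lemma cumdens_continuous: "continuous_on {0..1} F"
  unfolding cumdens_def by (rule indefinite_integral_continuous_1[OF integrable])

lemma cumdens_le_iff:
  assumes "a \<in> {0..1}" "b \<in> {0..1}"
  shows "F a \<le> F b \<longleftrightarrow> a \<le> b"
proof
  assume "a \<le> b"
  then show "F a \<le> F b"
    using cumdens_increment_bounds(1)[of a b] assms rmin_pos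
    by (smt (verit) atLeastAtMost_iff mult_nonneg_nonneg)
next
  assume le: "F a \<le> F b"
  show "a \<le> b"
  proof (rule ccontr)
    assume "\<not> a \<le> b"
    then have "rmin * (a - b) \<le> F a - F b" "0 < rmin * (a - b)"
      using cumdens_increment_bounds(1)[of b a] assms rmin_pos by auto
    then show False using le by linarith
  qed
qed

lemma cumdens_range: "a \<in> {0..1} \<Longrightarrow> 0 \<le> F a \<and> F a \<le> F 1"
  using cumdens_le_iff[of 0 a] cumdens_le_iff[of a 1] cumdens_0 by auto

lemma cumdens_1_bounds: "rmin \<le> F 1" "F 1 \<le> rmax"
  using cumdens_increment_bounds[of 0 1] cumdens_0 by auto

lemma cumdens_1_pos: "0 < F 1"
  using cumdens_1_bounds rmin_pos by linarith

lemma cumdens_ivt: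
  assumes "0 \<le> a" "a \<le> b" "b \<le> 1" "F a \<le> v" "v \<le> F b"
  shows "\<exists>c. a \<le> c \<and> c \<le> b \<and> F c = v"
  by (rule IVT'[OF assms(4,5,2)]) (rule continuous_on_subset[OF cumdens_continuous], use assms in auto)

lemma dist_le_cumdens_dist:
  assumes "a \<in> {0..1}" "b \<in> {0..1}"
  shows "\<bar>a - b\<bar> \<le> \<bar>F a - F b\<bar> / rmin"
proof (cases "a \<le> b")
  case True
  then have "rmin * (b - a) \<le> F b - F a" using cumdens_increment_bounds assms by auto
  then show ?thesis using True rmin_pos by (simp add: field_simps)
next
  case False
  then have "rmin * (a - b) \<le> F a - F b" using cumdens_increment_bounds assms by auto
  then show ?thesis using False rmin_pos by (simp add: field_simps)
qed

lemma dist_rho_cumdens: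
  assumes "a \<in> {0..1}" "b \<in> {0..1}"
  shows "dist_rho \<rho> a b = \<bar>F a - F b\<bar>"
  using assms integral_eq_cumdens_diff[of a b] integral_eq_cumdens_diff[of b a]
    cumdens_le_iff[of a b] cumdens_le_iff[of b a]
  unfolding dist_rho_def by (cases "a \<le> b") auto

text \<open>The alpha-median is the point where F takes the weighted mean of F a and F b;
  it exists by the intermediate value theorem and is unique since F is injective.\<close>

lemma amedian_cumdens:
  assumes "0 \<le> a" "a \<le> b" "b \<le> 1" "0 \<le> \<alpha>"
  shows "amedian \<alpha> \<rho> a b \<in> {a..b} \<and> F (amedian \<alpha> \<rho> a b) = (F a + \<alpha> * F b) / (1 + \<alpha>)"
proof -
  define v where "v = (F a + \<alpha> * F b) / (1 + \<alpha>)"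
  have "F a \<le> F b" using cumdens_le_iff[of a b] assms by auto
  then have "F a \<le> v" "v \<le> F b" unfolding v_def using assms(4)
    by (auto simp: field_simps intro: mult_left_mono)
  then obtain c where c: "a \<le> c" "c \<le> b" "F c = v" using cumdens_ivt assms by blast
  have median_iff: "integral {a..d} \<rho> = \<alpha> * integral {d..b} \<rho> \<longleftrightarrow> F d = v"
    if "a \<le> d" "d \<le> b" for d
  proof -
    have left: "integral {a..d} \<rho> = F d - F a" and right: "integral {d..b} \<rho> = F b - F d"
      using that assms integral_eq_cumdens_diff by auto
    show ?thesis unfolding v_def left right using assms(4) by (auto simp: field_simps)
  qed
  have "amedian \<alpha> \<rho> a b = c"
    unfolding amedian_def
  proof (rule the_equality)
    show "c \<in> {a..b} \<and> integral {a..c} \<rho> = \<alpha> * integral {c..b} \<rho>"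
      using c median_iff by auto
  next
    fix d assume "d \<in> {a..b} \<and> integral {a..d} \<rho> = \<alpha> * integral {d..b} \<rho>"
    then have "a \<le> d" "d \<le> b" "F d = F c" using median_iff c by auto
    then show "d = c" using cumdens_le_iff[of d c] cumdens_le_iff[of c d] c assms by auto
  qed
  then show ?thesis using c v_def by auto
qed

end


text \<open>Pigeonhole: among the n + 1 levels k L / n, k = 0..n, one keeps distance at least
  L / (2n) from any n given reals, since each real is that close to at most one level.\<close>

lemma far_grid_level:
  fixes u :: "nat \<Rightarrow> real"
  assumes n: "1 \<le> n" and L: "0 < L"
  shows "\<exists>k\<in>{0..n}. \<forall>i\<in>{1..n}. L / (2 * real n) \<le> \<bar>real k * L / real n - u i\<bar>"
proof (rule ccontr)
  define p where "p k = real k * L / real n" for k :: nat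
  assume "\<not> ?thesis"
  then have "\<forall>k\<in>{0..n}. \<exists>i\<in>{1..n}. \<bar>p k - u i\<bar> < L / (2 * real n)"
    by (simp add: not_le p_def)
  then have "\<exists>f. \<forall>k\<in>{0..n}. f k \<in> {1..n} \<and> \<bar>p k - u (f k)\<bar> < L / (2 * real n)"
    unfolding Bex_def by (rule bchoice)
  then obtain f where f: "\<forall>k\<in>{0..n}. f k \<in> {1..n} \<and> \<bar>p k - u (f k)\<bar> < L / (2 * real n)" ..
  have "inj_on f {0..n}"
  proof (rule inj_onI)
    fix j k assume jk: "j \<in> {0..n}" "k \<in> {0..n}" "f j = f k"
    have "\<bar>p j - u (f j)\<bar> < L / (2 * real n)" "\<bar>p k - u (f j)\<bar> < L / (2 * real n)"
      using f[rule_format, OF jk(1)] f[rule_format, OF jk(2)] jk(3) by auto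
    then have "\<bar>p j - p k\<bar> < L / real n" by (simp add: abs_less_iff)
    moreover have "p j - p k = (real j - real k) * (L / real n)"
      unfolding p_def using n by (simp add: field_simps)
    then have "\<bar>p j - p k\<bar> = \<bar>real j - real k\<bar> * (L / real n)"
      using L by (simp add: abs_mult)
    ultimately have "\<bar>real j - real k\<bar> * (L / real n) < 1 * (L / real n)" by simp
    then have "\<bar>real j - real k\<bar> < 1" using L n by (subst (asm) mult_less_cancel_right) auto
    then show "j = k" by linarith
  qed
  moreover have "f ` {0..n} \<subseteq> {1..n}" using f by auto
  ultimately have "card {0..n} \<le> card {1..n}" by (intro card_inj_on_le) auto
  then show False by simp
qed

text \<open>The target levels (2i - 1) L / (2n) are the midpoints of the n cells of length
  L / n, so every level in [0, L] lies within L / (2n) of one of them.\<close>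

definition target :: "real \<Rightarrow> nat \<Rightarrow> nat \<Rightarrow> real" where
  "target L n i = (2 * real i - 1) * L / (2 * real n)"

lemma target_range:
  assumes "i \<in> {1..n}" "0 \<le> L"
  shows "0 \<le> target L n i \<and> target L n i \<le> L"
proof -
  have r: "1 \<le> real i" "real i \<le> real n" using assms by auto
  have "0 \<le> (2 * real i - 1) * L" using r assms by simp
  moreover have "(2 * real i - 1) * L \<le> (2 * real n) * L" using r assms by (intro mult_right_mono) auto
  ultimately show ?thesis unfolding target_def using r by (simp add: pos_divide_le_eq ac_simps)
qed

lemma near_target_level:
  assumes n: "1 \<le> n" and L: "0 < L" and s: "0 \<le> s" "s \<le> L"
  shows "\<exists>i\<in>{1..n}. \<bar>s - target L n i\<bar> \<le> L / (2 * real n)"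
proof -
  define q where "q = s * real n / L"
  have q: "0 \<le> q" "q \<le> real n" unfolding q_def using s n L by (auto simp: field_simps)
  define i where "i = max 1 (nat \<lceil>q\<rceil>)"
  have "i \<in> {1..n}" unfolding i_def using q n by (auto simp: ceiling_le_iff)
  moreover have "\<bar>s - target L n i\<bar> \<le> L / (2 * real n)"
  proof -
    have "real i - 1 \<le> q" "q \<le> real i"
      unfolding i_def using q by (auto simp: max_def) linarith+
    have "s - target L n i = (2 * q - 2 * real i + 1) * (L / (2 * real n))"
      unfolding q_def target_def using L n by (simp add: field_simps)
    then have "\<bar>s - target L n i\<bar> = \<bar>2 * q - 2 * real i + 1\<bar> * (L / (2 * real n))"
      using L by (simp add: abs_mult)
    also have "\<dots> \<le> 1 * (L / (2 * real n))"
      by (rule mult_right_mono) (use \<open>real i - 1 \<le> q\<close> \<open>q \<le> real i\<close> L in auto)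
    finally show ?thesis by simp
  qed
  ultimately show ?thesis by blast
qed


subsection \<open>The averaging map in cumulative coordinates\<close>

text \<open>One step of the control law, written for the values v i = F (x i) with F 1 = L.\<close>

definition avg_step :: "real \<Rightarrow> nat \<Rightarrow> (nat \<Rightarrow> real) \<Rightarrow> nat \<Rightarrow> real" where
  "avg_step L n v i = (if i = 1 then v 2 / 3 else if i = n then (v (n - 1) + 2 * L) / 3
                       else (v (i - 1) + v (i + 1)) / 2)"

text \<open>The step maps monotone vectors with values in [0, L] to monotone vectors; this is
  why the agents never overtake each other.\<close>

lemma avg_step_mono:
  assumes n: "2 \<le> n" and range: "\<forall>j\<in>{1..n}. 0 \<le> v j \<and> v j \<le> L"
    and mono: "\<forall>j. 1 \<le> j \<and> j < n \<longrightarrow> v j \<le> v (j + 1)" and i: "1 \<le> i" "i < n"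
  shows "avg_step L n v i \<le> avg_step L n v (i + 1)"
proof -
  consider "i = 1" "n = 2" | "i = 1" "n > 2" | "i > 1" "i + 1 = n" | "i > 1" "i + 1 < n"
    using n i by linarith
  then show ?thesis
  proof cases
    case 1
    then have "v 2 \<le> L" "0 \<le> v 1" "0 \<le> v 2" using range by auto
    then show ?thesis using 1 unfolding avg_step_def by simp
  next
    case 2
    then have "v 2 \<le> v 3" "0 \<le> v 1" "0 \<le> v 2" using range mono[rule_format, of 2] by auto
    then show ?thesis using 2 unfolding avg_step_def by (simp add: numeral_3_eq_3)
  next
    case 3
    have "v (i - 1) \<le> v (i - 1 + 1)" by (rule mono[rule_format]) (use 3 in auto)
    moreover have "v (i + 1) \<le> L" "v i \<le> L" using range 3 by auto
    moreover have "n - 1 = i" using 3 by simp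
    ultimately show ?thesis using 3 unfolding avg_step_def by auto
  next
    case 4
    have "v (i - 1) \<le> v (i - 1 + 1)" by (rule mono[rule_format]) (use 4 in auto)
    moreover have "v (i + 1) \<le> v (i + 2)" using mono[rule_format, of "i + 1"] 4 by auto
    ultimately show ?thesis using 4 unfolding avg_step_def by auto
  qed
qed

text \<open>The target is a fixed point, so the error vector evolves by the linear part of
  the step alone.\<close>

lemma avg_step_error:
  fixes v :: "nat \<Rightarrow> real" and L :: real
  assumes n: "2 \<le> n" and i: "i \<in> {1..n}"
  defines "e \<equiv> \<lambda>j. v j - target L n j"
  shows "avg_step L n v i - target L n i =
    (if i = 1 then e 2 / 3 else if i = n then e (n - 1) / 3 else (e (i - 1) + e (i + 1)) / 2)"
  using n i unfolding avg_step_def target_def e_def by (auto simp: of_nat_diff field_simps)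

definition weight :: "nat \<Rightarrow> nat \<Rightarrow> real" where
  "weight n i = real n ^ 2 - (real i - (real n + 1) / 2) ^ 2"

lemma weight_bounds:
  assumes "1 \<le> i" "i \<le> n"
  shows "3 / 4 * real n ^ 2 \<le> weight n i" "weight n i \<le> real n ^ 2"
proof -
  have "\<bar>real i - (real n + 1) / 2\<bar> \<le> real n / 2" using assms by (simp add: abs_le_iff field_simps)
  then have "(real i - (real n + 1) / 2) ^ 2 \<le> (real n / 2) ^ 2"
    by (metis abs_ge_zero power2_abs power_mono)
  then show "3 / 4 * real n ^ 2 \<le> weight n i" unfolding weight_def by (simp add: power_divide)
  show "weight n i \<le> real n ^ 2" unfolding weight_def by simp
qed

lemma weight_symmetric: "i \<le> n + 1 \<Longrightarrow> weight n (n + 1 - i) = weight n i"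
  unfolding weight_def by (simp add: of_nat_diff power2_eq_square field_simps)

text \<open>Averaging the neighbours lowers the weight by exactly 1, i.e. by at least the
  fraction 1 / n^2 of it; at the ends the factor 1/3 gives the same contraction.\<close>

lemma weight_interior_contracts:
  assumes "1 \<le> i" "i \<le> n"
  shows "(weight n (i - 1) + weight n (i + 1)) / 2 \<le> (1 - 1 / real n ^ 2) * weight n i"
proof -
  have "(weight n (i - 1) + weight n (i + 1)) / 2 = weight n i - 1"
    using assms unfolding weight_def by (simp add: of_nat_diff power2_eq_square field_simps)
  moreover have "weight n i / real n ^ 2 \<le> 1"
    using weight_bounds(2)[OF assms] assms by (simp add: field_simps)
  ultimately show ?thesis by (simp add: algebra_simps)
qed

lemma weight_end_contracts:
  assumes n: "2 \<le> n"
  shows "weight n 2 / 3 \<le> (1 - 1 / real n ^ 2) * weight n 1"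
proof -
  have "(2::real) ^ 2 \<le> real n ^ 2" by (rule power_mono) (use n in auto)
  then have "1 / real n ^ 2 \<le> 1 / 4" using n by (simp add: field_simps)
  then have factor: "3 / 4 \<le> 1 - 1 / real n ^ 2" by simp
  have "weight n 2 / 3 \<le> real n ^ 2 / 3" using weight_bounds(2)[of 2 n] n by simp
  also have "\<dots> \<le> 3 / 4 * (3 / 4 * real n ^ 2)" by simp
  also have "\<dots> \<le> (1 - 1 / real n ^ 2) * weight n 1"
    by (rule mult_mono[OF factor weight_bounds(1)]) (use factor n in auto)
  finally show ?thesis .
qed

lemma avg_step_contracts:
  assumes n: "2 \<le> n" and M: "0 \<le> M"
    and err: "\<forall>j\<in>{1..n}. \<bar>v j - target L n j\<bar> \<le> M * weight n j" and i: "i \<in> {1..n}"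
  shows "\<bar>avg_step L n v i - target L n i\<bar> \<le> M * ((1 - 1 / real n ^ 2) * weight n i)"
proof -
  have end_bound: "M * (weight n 2 / 3) \<le> M * ((1 - 1 / real n ^ 2) * weight n 1)"
    by (rule mult_left_mono[OF weight_end_contracts[OF n] M])
  consider "i = 1" | "i = n" "i \<noteq> 1" | "2 \<le> i" "i \<le> n - 1" using i n by force
  then show ?thesis
  proof cases
    case 1
    have step: "avg_step L n v i - target L n i = (v 2 - target L n 2) / 3"
      using avg_step_error[OF n i, of L v] 1 by simp
    have "\<bar>avg_step L n v i - target L n i\<bar> = \<bar>v 2 - target L n 2\<bar> / 3"
      unfolding step by simp
    also have "\<dots> \<le> M * (weight n 2 / 3)" using err n by auto
    also have "\<dots> \<le> M * ((1 - 1 / real n ^ 2) * weight n 1)" by (rule end_bound)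
    finally show ?thesis using 1 by simp
  next
    case 2
    have step: "avg_step L n v i - target L n i = (v (n - 1) - target L n (n - 1)) / 3"
      using avg_step_error[OF n i, of L v] 2 by simp
    have "\<bar>avg_step L n v i - target L n i\<bar> = \<bar>v (n - 1) - target L n (n - 1)\<bar> / 3"
      unfolding step by simp
    also have "\<dots> \<le> M * (weight n (n - 1) / 3)" using err n by auto
    also have "weight n (n - 1) = weight n 2"
      using weight_symmetric[of 2 n] n by (simp add: numeral_2_eq_2)
    also have "M * (weight n 2 / 3) \<le> M * ((1 - 1 / real n ^ 2) * weight n 1)" by (rule end_bound)
    also have "weight n 1 = weight n n" using weight_symmetric[of 1 n] by simp
    finally show ?thesis using 2 by simp
  next
    case 3
    then have "i \<noteq> 1" "i \<noteq> n" using n by auto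
    then have step: "avg_step L n v i - target L n i
        = ((v (i - 1) - target L n (i - 1)) + (v (i + 1) - target L n (i + 1))) / 2"
      using avg_step_error[OF n i, of L v] by simp
    have "\<bar>avg_step L n v i - target L n i\<bar>
        \<le> (\<bar>v (i - 1) - target L n (i - 1)\<bar> + \<bar>v (i + 1) - target L n (i + 1)\<bar>) / 2"
      unfolding step by (simp add: abs_triangle_ineq)
    also have "\<dots> \<le> M * ((weight n (i - 1) + weight n (i + 1)) / 2)"
    proof -
      have "i - 1 \<in> {1..n}" "i + 1 \<in> {1..n}" using 3 n by auto
      then show ?thesis using err by (simp add: field_simps add_mono)
    qed
    also have "\<dots> \<le> M * ((1 - 1 / real n ^ 2) * weight n i)"
      using weight_interior_contracts[of i n] 3 M by (intro mult_left_mono) auto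
    finally show ?thesis .
  qed
qed

subsection \<open>Coverage\<close>

context bounded_density
begin

lemma coverage_values:
  fixes n :: nat and x :: "nat \<Rightarrow> real"
  assumes "y \<in> {0..1}" "\<forall>i\<in>{1..n}. x i \<in> {0..1}"
  shows "(\<lambda>i. dist_rho \<rho> y (x i)) ` {1..n} = (\<lambda>i. \<bar>F y - F (x i)\<bar>) ` {1..n}"
  using assms dist_rho_cumdens by (intro image_cong) auto

lemma coverage_bdd:
  fixes n :: nat and x :: "nat \<Rightarrow> real"
  assumes n: "1 \<le> n" and x: "\<forall>i\<in>{1..n}. x i \<in> {0..1}"
  shows "bdd_above ((\<lambda>y. Min ((\<lambda>i. dist_rho \<rho> y (x i)) ` {1..n})) ` {0..1})"
proof (rule bdd_aboveI2)
  fix y :: real assume y: "y \<in> {0..1}"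
  have "Min ((\<lambda>i. dist_rho \<rho> y (x i)) ` {1..n}) \<le> dist_rho \<rho> y (x 1)"
    by (rule Min_le) (use n in \<open>auto intro!: imageI\<close>)
  also have "\<dots> \<le> F 1"
    using dist_rho_cumdens cumdens_range[of y] cumdens_range[of "x 1"] y x n
    by (auto simp: abs_le_iff)
  finally show "Min ((\<lambda>i. dist_rho \<rho> y (x i)) ` {1..n}) \<le> F 1" .
qed

text \<open>Lower bound for every configuration: choose y with F y a grid level far from all
  F (x i), by far_grid_level.\<close>

lemma coverage_lower_bound:
  assumes n: "1 \<le> n" and x: "\<forall>i\<in>{1..n}. x i \<in> {0..1}"
  shows "F 1 / (2 * real n) \<le> coverage n x \<rho>"
proof -
  obtain k where k: "k \<in> {0..n}"
    and far: "\<forall>i\<in>{1..n}. F 1 / (2 * real n) \<le> \<bar>real k * F 1 / real n - F (x i)\<bar>"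
    using far_grid_level[OF n cumdens_1_pos, of "\<lambda>i. F (x i)"] by blast
  have "0 \<le> real k * F 1 / real n" "real k * F 1 / real n \<le> F 1"
    using k cumdens_1_pos n by (auto simp: field_simps)
  then obtain y where y: "y \<in> {0..1}" "F y = real k * F 1 / real n"
    using cumdens_ivt[of 0 1] cumdens_0 by auto
  have "F 1 / (2 * real n) \<le> Min ((\<lambda>i. dist_rho \<rho> y (x i)) ` {1..n})"
    unfolding coverage_values[OF y(1) x] using y far n by auto
  also have "\<dots> \<le> coverage n x \<rho>" unfolding coverage_def
    by (rule cSUP_upper[OF y(1) coverage_bdd[OF n x]])
  finally show ?thesis .
qed

text \<open>A configuration whose cumulative values are the targets attains the lower bound,
  by near_target_level, and is therefore optimal.\<close>

lemma coverage_at_target: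
  assumes n: "1 \<le> n" and xb: "\<forall>i\<in>{1..n}. xb i \<in> {0..1} \<and> F (xb i) = target (F 1) n i"
  shows "coverage n xb \<rho> = F 1 / (2 * real n)"
proof (rule antisym)
  show "coverage n xb \<rho> \<le> F 1 / (2 * real n)" unfolding coverage_def
  proof (rule cSUP_least)
    fix y :: real assume y: "y \<in> {0..1}"
    obtain i where i: "i \<in> {1..n}" and near: "\<bar>F y - target (F 1) n i\<bar> \<le> F 1 / (2 * real n)"
      using near_target_level[OF n cumdens_1_pos] cumdens_range[OF y] by blast
    have "Min ((\<lambda>i. dist_rho \<rho> y (xb i)) ` {1..n}) \<le> dist_rho \<rho> y (xb i)"
      by (rule Min_le) (use i in \<open>auto intro!: imageI\<close>)
    also have "\<dots> = \<bar>F y - target (F 1) n i\<bar>" using dist_rho_cumdens y xb i by auto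
    finally show "Min ((\<lambda>i. dist_rho \<rho> y (xb i)) ` {1..n}) \<le> F 1 / (2 * real n)"
      using near by linarith
  qed auto
  show "F 1 / (2 * real n) \<le> coverage n xb \<rho>"
    using coverage_lower_bound[OF n] xb by auto
qed

lemma target_configuration_optimal:
  assumes n: "1 \<le> n" and xb: "\<forall>i\<in>{1..n}. xb i \<in> {0..1} \<and> F (xb i) = target (F 1) n i"
  shows "coverage n xb \<rho> = opt_coverage n \<rho>"
  unfolding opt_coverage_def
proof (rule antisym)
  show "coverage n xb \<rho> \<le> (INF x\<in>{x. \<forall>i\<in>{1..n}. x i \<in> {0..1}}. coverage n x \<rho>)"
    unfolding coverage_at_target[OF n xb]
    by (rule cINF_greatest) (use coverage_lower_bound[OF n] xb in auto)
  show "(INF x\<in>{x. \<forall>i\<in>{1..n}. x i \<in> {0..1}}. coverage n x \<rho>) \<le> coverage n xb \<rho>"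
    by (rule cINF_lower) (use coverage_lower_bound[OF n] xb in \<open>auto intro!: bdd_belowI2\<close>)
qed

end


subsection \<open>Trajectories of the control law\<close>

locale coverage_dynamics = bounded_density +
  fixes n :: nat and x :: "nat \<Rightarrow> nat \<Rightarrow> real"
  assumes n2: "2 \<le> n" and x0_lower: "0 \<le> x 0 1"
    and x0_mono: "\<forall>i. 1 \<le> i \<and> i < n \<longrightarrow> x 0 i \<le> x 0 (i + 1)" and x0_upper: "x 0 n \<le> 1"
    and law: "coverage_law n \<rho> x"
begin

abbreviation "lam \<equiv> 1 - 1 / real n ^ 2"

lemma n_square_ge_1: "1 \<le> real n ^ 2"
  using n2 by (simp add: one_le_power)

lemma lam_range: "0 \<le> lam" "lam < 1"
proof -
  have "1 / real n ^ 2 \<le> 1" using n_square_ge_1 by (simp add: divide_le_eq)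
  then show "0 \<le> lam" by simp
  show "lam < 1" using n2 by simp
qed

definition ordered_in_unit :: "nat \<Rightarrow> bool" where
  "ordered_in_unit t \<longleftrightarrow>
     (\<forall>i\<in>{1..n}. x t i \<in> {0..1}) \<and> (\<forall>i. 1 \<le> i \<and> i < n \<longrightarrow> x t i \<le> x t (i + 1))"

lemma ordered_in_unit_0: "ordered_in_unit 0"
  unfolding ordered_in_unit_def
proof (intro conjI ballI)
  fix i assume i: "i \<in> {1..n}"
  have "x 0 1 \<le> x 0 i" "x 0 i \<le> x 0 n" by (rule stepwise_mono_le[OF x0_mono], use i in auto)+
  then show "x 0 i \<in> {0..1}" using x0_lower x0_upper by auto
qed (use x0_mono in auto)

text \<open>Under the invariant, one step of the law is the averaging map in the cumulative
  coordinates (all medians are taken of ordered points of [0,1]).\<close>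

lemma law_in_cumdens_coordinates:
  assumes "ordered_in_unit t" and i: "i \<in> {1..n}"
  shows "x (Suc t) i \<in> {0..1} \<and> F (x (Suc t) i) = avg_step (F 1) n (\<lambda>j. F (x t j)) i"
proof -
  have range: "\<And>j. j \<in> {1..n} \<Longrightarrow> 0 \<le> x t j \<and> x t j \<le> 1"
    and mono: "\<And>j. 1 \<le> j \<Longrightarrow> j < n \<Longrightarrow> x t j \<le> x t (j + 1)"
    using assms unfolding ordered_in_unit_def by auto
  have first: "x (Suc t) 1 = amedian (1/2) \<rho> 0 (x t 2)"
    and middle: "\<And>i. 2 \<le> i \<Longrightarrow> i \<le> n - 1 \<Longrightarrow> x (Suc t) i = amedian 1 \<rho> (x t (i - 1)) (x t (i + 1))"
    and last: "x (Suc t) n = amedian 2 \<rho> (x t (n - 1)) 1"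
    using law unfolding coverage_law_def by auto
  consider "i = 1" | "i = n" "i \<noteq> 1" | "2 \<le> i" "i \<le> n - 1" using i n2 by force
  then show ?thesis
  proof cases
    case 1
    have "0 \<le> x t 2" "x t 2 \<le> 1" using range[of 2] n2 by auto
    then show ?thesis
      using amedian_cumdens[of 0 "x t 2" "1/2"] first cumdens_0 1 unfolding avg_step_def by auto
  next
    case 2
    have "0 \<le> x t (n - 1)" "x t (n - 1) \<le> 1" using range[of "n - 1"] n2 by auto
    then show ?thesis
      using amedian_cumdens[of "x t (n - 1)" 1 2] last 2 unfolding avg_step_def by auto
  next
    case 3
    have "x t (i - 1) \<le> x t i" "x t i \<le> x t (i + 1)" using mono[of "i - 1"] mono[of i] 3 by auto
    moreover have "i - 1 \<in> {1..n}" "i + 1 \<in> {1..n}" using 3 n2 by auto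
    then have "0 \<le> x t (i - 1)" "x t (i + 1) \<le> 1" using range by blast+
    ultimately show ?thesis
      using amedian_cumdens[of "x t (i - 1)" "x t (i + 1)" 1] middle[OF 3] 3 n2
      unfolding avg_step_def by auto
  qed
qed

lemma ordered_in_unit_all: "ordered_in_unit t"
proof (induction t)
  case 0
  show ?case by (rule ordered_in_unit_0)
next
  case (Suc t)
  let ?v = "\<lambda>j. F (x t j)"
  have next_pos: "x (Suc t) i \<in> {0..1}" "F (x (Suc t) i) = avg_step (F 1) n ?v i"
    if "i \<in> {1..n}" for i
    using law_in_cumdens_coordinates[OF Suc that] by auto
  have range: "\<forall>j\<in>{1..n}. 0 \<le> ?v j \<and> ?v j \<le> F 1"
    using Suc cumdens_range unfolding ordered_in_unit_def by blast
  have mono: "\<forall>j. 1 \<le> j \<and> j < n \<longrightarrow> ?v j \<le> ?v (j + 1)"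
    using Suc cumdens_le_iff unfolding ordered_in_unit_def by auto
  have "x (Suc t) i \<le> x (Suc t) (i + 1)" if i: "1 \<le> i" "i < n" for i
  proof -
    have "F (x (Suc t) i) \<le> F (x (Suc t) (i + 1))"
      using avg_step_mono[OF n2 range mono i] next_pos(2) i by simp
    then show ?thesis using cumdens_le_iff next_pos(1) i by simp
  qed
  then show ?case unfolding ordered_in_unit_def using next_pos(1) by blast
qed

text \<open>Geometric decay of the weighted error in cumulative coordinates; initially the
  error is at most F 1, which is at most (4 F 1 / (3 n^2)) times the weight.\<close>

lemma cumdens_error_bound:
  "\<forall>i\<in>{1..n}. \<bar>F (x t i) - target (F 1) n i\<bar> \<le> 4 * F 1 / (3 * real n ^ 2) * lam ^ t * weight n i"
proof (induction t)
  case 0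
  show ?case
  proof
    fix i assume i: "i \<in> {1..n}"
    have "0 \<le> F (x 0 i) \<and> F (x 0 i) \<le> F 1"
      using ordered_in_unit_0 i cumdens_range unfolding ordered_in_unit_def by blast
    moreover have "0 \<le> target (F 1) n i \<and> target (F 1) n i \<le> F 1"
      using target_range[OF i] cumdens_1_pos by auto
    ultimately have "\<bar>F (x 0 i) - target (F 1) n i\<bar> \<le> F 1" by linarith
    also have "F 1 = 4 * F 1 / (3 * real n ^ 2) * (3 / 4 * real n ^ 2)" using n2 by simp
    also have "\<dots> \<le> 4 * F 1 / (3 * real n ^ 2) * weight n i"
      using weight_bounds i cumdens_1_pos by (intro mult_left_mono) auto
    finally show "\<bar>F (x 0 i) - target (F 1) n i\<bar> \<le> 4 * F 1 / (3 * real n ^ 2) * lam ^ 0 * weight n i"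
      by simp
  qed
next
  case (Suc t)
  have M: "0 \<le> 4 * F 1 / (3 * real n ^ 2) * lam ^ t" using cumdens_1_pos lam_range by simp
  show ?case
  proof
    fix i assume i: "i \<in> {1..n}"
    have step: "F (x (Suc t) i) = avg_step (F 1) n (\<lambda>j. F (x t j)) i"
      using law_in_cumdens_coordinates[OF ordered_in_unit_all i] by blast
    have factor: "4 * F 1 / (3 * real n ^ 2) * lam ^ Suc t * weight n i
        = 4 * F 1 / (3 * real n ^ 2) * lam ^ t * (lam * weight n i)"
      by (simp only: power_Suc mult_ac)
    show "\<bar>F (x (Suc t) i) - target (F 1) n i\<bar> \<le> 4 * F 1 / (3 * real n ^ 2) * lam ^ Suc t * weight n i"
      unfolding step factor by (rule avg_step_contracts[OF n2 M Suc.IH i])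
  qed
qed

definition xbar :: "nat \<Rightarrow> real" where
  "xbar i = (SOME c. 0 \<le> c \<and> c \<le> 1 \<and> F c = target (F 1) n i)"

lemma xbar_target:
  assumes i: "i \<in> {1..n}"
  shows "xbar i \<in> {0..1} \<and> F (xbar i) = target (F 1) n i"
proof -
  have "0 \<le> target (F 1) n i" "target (F 1) n i \<le> F 1"
    using target_range[OF i] cumdens_1_pos by auto
  then have "\<exists>c. 0 \<le> c \<and> c \<le> 1 \<and> F c = target (F 1) n i"
    using cumdens_ivt[of 0 1 "target (F 1) n i"] cumdens_0 by auto
  then show ?thesis unfolding xbar_def by (metis (mono_tags, lifting) atLeastAtMost_iff someI_ex)
qed

text \<open>Back in the original coordinates the error is at most 4/3 (rmax / rmin) lam^t,
  since F expands distances by at least rmin and the weight is at most n^2.\<close>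

lemma position_error_bound:
  assumes i: "i \<in> {1..n}"
  shows "\<bar>x t i - xbar i\<bar> \<le> 4 / 3 * (rmax / rmin) * lam ^ t"
proof -
  have "x t i \<in> {0..1}" using ordered_in_unit_all i unfolding ordered_in_unit_def by blast
  then have "\<bar>x t i - xbar i\<bar> \<le> \<bar>F (x t i) - F (xbar i)\<bar> / rmin"
    using dist_le_cumdens_dist xbar_target[OF i] by blast
  also have "\<bar>F (x t i) - F (xbar i)\<bar> \<le> 4 * F 1 / (3 * real n ^ 2) * lam ^ t * weight n i"
    using cumdens_error_bound xbar_target[OF i] i by auto
  also have "\<dots> \<le> 4 * F 1 / (3 * real n ^ 2) * lam ^ t * real n ^ 2"
    using weight_bounds(2)[of i n] i cumdens_1_pos lam_range by (intro mult_left_mono) auto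
  also have "\<dots> = 4 / 3 * F 1 * lam ^ t" using n2 by simp
  also have "\<dots> \<le> 4 / 3 * rmax * lam ^ t" using cumdens_1_bounds lam_range by (intro mult_right_mono) auto
  finally show ?thesis using rmin_pos by (simp add: divide_right_mono field_simps)
qed

lemma position_error_le_eps:
  assumes e: "0 < \<epsilon>" "\<epsilon> \<le> 1" and t: "real n ^ 2 * ln (real n / \<epsilon> * (rmax / rmin)) \<le> real t"
    and i: "i \<in> {1..n}"
  shows "\<bar>x t i - xbar i\<bar> \<le> \<epsilon>"
proof -
  define Q where "Q = real n / \<epsilon> * (rmax / rmin)"
  have ratio: "0 < rmax / rmin" using rmin_le_rmax rmin_pos by simp
  have Q: "0 < Q" unfolding Q_def using e n2 rmin_pos rmin_le_rmax by (intro mult_pos_pos divide_pos_pos) auto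
  have "lam ^ t \<le> exp (- real t / real n ^ 2)"
    by (rule one_minus_inverse_power_le_exp[OF n_square_ge_1])
  also have "\<dots> \<le> exp (- ln Q)"
    using t n2 unfolding Q_def by (simp add: field_simps)
  also have "\<dots> = 1 / Q" using Q by (simp add: exp_minus')
  finally have decay: "lam ^ t \<le> 1 / Q" .
  have "\<bar>x t i - xbar i\<bar> \<le> 4 / 3 * (rmax / rmin) * lam ^ t" by (rule position_error_bound[OF i])
  also have "\<dots> \<le> 4 / 3 * (rmax / rmin) * (1 / Q)" using decay ratio by (intro mult_left_mono) auto
  also have "\<dots> = 4 / 3 * \<epsilon> / real n" unfolding Q_def using ratio e n2 rmin_pos by (simp add: field_simps)
  also have "\<dots> \<le> \<epsilon>" using e n2 by (simp add: field_simps)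
  finally show ?thesis .
qed

lemma trajectory_converges:
  assumes i: "i \<in> {1..n}"
  shows "(\<lambda>t. x t i) \<longlonglongrightarrow> xbar i"
proof -
  have "norm lam < 1" using lam_range by simp
  then have decay: "(\<lambda>t. 4 / 3 * (rmax / rmin) * lam ^ t) \<longlonglongrightarrow> 0"
    by (rule tendsto_mult_right_zero[OF LIMSEQ_power_zero])
  have "\<forall>\<^sub>F t in sequentially. norm (x t i - xbar i) \<le> 4 / 3 * (rmax / rmin) * lam ^ t"
    unfolding real_norm_def by (intro always_eventually allI position_error_bound[OF i])
  then have "(\<lambda>t. x t i - xbar i) \<longlonglongrightarrow> 0"
    by (rule Lim_null_comparison[OF _ decay])
  then show ?thesis by (rule Lim_null[THEN iffD2])
qed

lemma limit_optimal: "coverage n xbar \<rho> = opt_coverage n \<rho>"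
  by (rule target_configuration_optimal) (use xbar_target n2 in auto)

end


theorem theorem1:
  shows "\<exists>C>0. \<forall>(n::nat) (\<rho>::real \<Rightarrow> real) (\<rho>min::real) (\<rho>max::real) (x::nat \<Rightarrow> nat \<Rightarrow> real).
     n \<ge> 2 \<and> piecewise_continuous_on 0 1 \<rho> \<and> 0 < \<rho>min \<and>
     (\<forall>z\<in>{0..1}. \<rho>min \<le> \<rho> z \<and> \<rho> z \<le> \<rho>max) \<and>
     0 \<le> x 0 1 \<and> (\<forall>i. 1 \<le> i \<and> i < n \<longrightarrow> x 0 i \<le> x 0 (i + 1)) \<and> x 0 n \<le> 1 \<and>
     coverage_law n \<rho> x
     \<longrightarrow> (\<exists>xbar::nat \<Rightarrow> real.
            (\<forall>i\<in>{1..n}. (\<lambda>t. x t i) \<longlonglongrightarrow> xbar i) \<and>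
            coverage n xbar \<rho> = opt_coverage n \<rho> \<and>
            (\<forall>\<epsilon>. 0 < \<epsilon> \<and> \<epsilon> \<le> 1 \<longrightarrow>
               (\<forall>t::nat. real t \<ge> C * real n ^ 2 * ln (real n / \<epsilon> * (\<rho>max / \<rho>min)) \<longrightarrow>
                  (\<forall>i\<in>{1..n}. \<bar>x t i - xbar i\<bar> \<le> \<epsilon>))))"
proof (intro exI[of _ "1::real"] conjI allI impI, unfold mult_1)
  fix n :: nat and \<rho> :: "real \<Rightarrow> real" and \<rho>min \<rho>max :: real and x :: "nat \<Rightarrow> nat \<Rightarrow> real"
  assume hyps: "n \<ge> 2 \<and> piecewise_continuous_on 0 1 \<rho> \<and> 0 < \<rho>min \<and>
     (\<forall>z\<in>{0..1}. \<rho>min \<le> \<rho> z \<and> \<rho> z \<le> \<rho>max) \<and>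
     0 \<le> x 0 1 \<and> (\<forall>i. 1 \<le> i \<and> i < n \<longrightarrow> x 0 i \<le> x 0 (i + 1)) \<and> x 0 n \<le> 1 \<and>
     coverage_law n \<rho> x"
  have "\<bar>\<rho> z\<bar> \<le> \<rho>max" if "z \<in> {0..1}" for z
  proof -
    have "\<rho>min \<le> \<rho> z" "\<rho> z \<le> \<rho>max" "0 < \<rho>min" using hyps that by auto
    then show ?thesis by (simp add: abs_le_iff)
  qed
  then have "\<rho> integrable_on {0..1}"
    using hyps by (intro piecewise_continuous_integrable[of 0 1 \<rho> \<rho>max]) auto
  then interpret coverage_dynamics \<rho> \<rho>min \<rho>max n x
    using hyps by unfold_locales auto
  show "\<exists>xbar. (\<forall>i\<in>{1..n}. (\<lambda>t. x t i) \<longlonglongrightarrow> xbar i) \<and> coverage n xbar \<rho> = opt_coverage n \<rho> \<and>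
      (\<forall>\<epsilon>. 0 < \<epsilon> \<and> \<epsilon> \<le> 1 \<longrightarrow>
         (\<forall>t::nat. real t \<ge> real n ^ 2 * ln (real n / \<epsilon> * (\<rho>max / \<rho>min)) \<longrightarrow>
            (\<forall>i\<in>{1..n}. \<bar>x t i - xbar i\<bar> \<le> \<epsilon>)))"
    by (intro exI[of _ xbar] conjI ballI allI impI trajectory_converges limit_optimal
        position_error_le_eps) auto
qed simp

end
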